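(* Let $Z$ be any infinite discrete space. Then the remainder $\beta Z\setminus Z$ is not a $\Delta$-space.
   Context: $\beta Z$ is the Stone–Čech compactification of $Z$. A topological space $X$ is a $\Delta$-space if for every decreasing sequence $\{D_n:n\in\omega\}$ of subsets of $X$ with $\bigcap_n D_n=\emptyset$ there is a decreasing sequence $\{V_n:n\in\omega\}$ of open subsets of $X$ with $D_n\subseteq V_n$ for all $n$ and $\bigcap_n V_n=\emptyset$. *)

theory Defs
  imports "HOL-Analysis.Analysis"
begin

definition delta_space :: "'a topology \<Rightarrow> bool" where
  "delta_space X \<longleftrightarrow>
     (\<forall>D :: nat \<Rightarrow> 'a set.
        (\<forall>n. D n \<subseteq> topspace X) \<and> decseq D \<and> (\<Inter>n. D n) = {} \<longrightarrow>
        (\<exists>V :: nat \<Rightarrow> 'a set. (\<forall>n. openin X (V n)) \<and> decseq V \<and>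
            (\<forall>n. D n \<subseteq> V n) \<and> (\<Inter>n. V n) = {}))"

definition is_ultrafilter_on :: "'a set \<Rightarrow> 'a set set \<Rightarrow> bool" where
  "is_ultrafilter_on Z U \<longleftrightarrow>
     U \<subseteq> Pow Z \<and> Z \<in> U \<and> {} \<notin> U \<and>
     (\<forall>A\<in>U. \<forall>B\<in>U. A \<inter> B \<in> U) \<and>
     (\<forall>A\<in>U. \<forall>B. A \<subseteq> B \<and> B \<subseteq> Z \<longrightarrow> B \<in> U) \<and>
     (\<forall>A. A \<subseteq> Z \<longrightarrow> A \<in> U \<or> Z - A \<in> U)"

text \<open>The principal ultrafilter at z (this is the embedding of Z into beta Z).\<close>
definition principal_uf :: "'a set \<Rightarrow> 'a \<Rightarrow> 'a set set" where
  "principal_uf Z z = {A. A \<subseteq> Z \<and> z \<in> A}"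

text \<open>Stone-Cech compactification of the discrete space Z: the space of all
  ultrafilters on Z with the Stone topology, whose basic open sets are
  {U. A \<in> U} for A \<subseteq> Z.\<close>
definition beta_discrete :: "'a set \<Rightarrow> 'a set set topology" where
  "beta_discrete Z =
     topology_generated_by
       ((\<lambda>A. {U. is_ultrafilter_on Z U \<and> A \<in> U}) ` Pow Z)"

definition beta_remainder :: "'a set \<Rightarrow> 'a set set topology" where
  "beta_remainder Z =
     subtopology (beta_discrete Z) (topspace (beta_discrete Z) - principal_uf Z ` Z)"

end

theory Submission
  imports Defs
begin

(* Inject bool list \<times> nat into Z by e. The sets E_k = {e (xs, t) | xs ! k} form an independent
   family, so q \<mapsto> (E_k \<in> q)_k maps the remainder onto the Cantor space, and every fibre is
   nonempty. The map is closed: if a fibre lies in an open set V, so do all fibres over some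
   cylinder around it. Let D_n be the preimage of the finitely supported sequences with a 1 at or
   beyond n; the D_n decrease to the empty set. If open sets V_n contain the D_n, then every
   cylinder has a subcylinder whose fibres lie in V_n, so by the Baire property of the Cantor space
   some fibre lies in all V_n, and their intersection is not empty. *)

definition fip_on :: "'a set \<Rightarrow> 'a set set \<Rightarrow> bool" where
  "fip_on Z M \<longleftrightarrow> M \<subseteq> Pow Z \<and> (\<forall>G. finite G \<and> G \<subseteq> M \<longrightarrow> Z \<inter> \<Inter>G \<noteq> {})"

lemma fip_on_Union_chain:
  assumes "C \<noteq> {}" "subset.chain UNIV C" "\<And>M. M \<in> C \<Longrightarrow> fip_on Z M"
  shows "fip_on Z (\<Union>C)"
  unfolding fip_on_def
proof (intro conjI allI impI)
  show "\<Union>C \<subseteq> Pow Z" using assms(3) by (auto simp: fip_on_def)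
  fix G assume G: "finite G \<and> G \<subseteq> \<Union>C"
  then obtain M where "M \<in> C" "G \<subseteq> M"
    using finite_subset_Union_chain[OF _ _ assms(1,2)] by blast
  then show "Z \<inter> \<Inter>G \<noteq> {}" using assms(3) G by (auto simp: fip_on_def)
qed

lemma maximal_fip_on_exists:
  assumes "fip_on Z M0"
  obtains M where "M0 \<subseteq> M" "fip_on Z M" "\<forall>X. fip_on Z X \<and> M \<subseteq> X \<longrightarrow> X = M"
proof -
  let ?A = "{M. M0 \<subseteq> M \<and> fip_on Z M}"
  have "\<forall>C\<in>chains ?A. \<exists>U\<in>?A. \<forall>X\<in>C. X \<subseteq> U"
  proof
    fix C assume C: "C \<in> chains ?A"
    show "\<exists>U\<in>?A. \<forall>X\<in>C. X \<subseteq> U"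
    proof (cases "C = {}")
      case True
      then show ?thesis using assms by auto
    next
      case False
      have "fip_on Z (\<Union>C)"
        using C False by (intro fip_on_Union_chain) (auto simp: chains_def chain_subset_alt_def)
      moreover have "M0 \<subseteq> \<Union>C" using False C by (auto simp: chains_def)
      ultimately show ?thesis by blast
    qed
  qed
  then obtain M where "M \<in> ?A" and "\<forall>X\<in>?A. M \<subseteq> X \<longrightarrow> X = M"
    by (rule Zorn_Lemma2[THEN bexE])
  then have "M0 \<subseteq> M" "fip_on Z M" "\<forall>X. fip_on Z X \<and> M \<subseteq> X \<longrightarrow> X = M"
    by auto
  then show ?thesis by (rule that)
qed

lemma maximal_fip_on_mem:
  assumes M: "fip_on Z M" and maximal: "\<forall>X. fip_on Z X \<and> M \<subseteq> X \<longrightarrow> X = M"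
    and "A \<subseteq> Z" and meets: "\<And>G. finite G \<Longrightarrow> G \<subseteq> M \<Longrightarrow> Z \<inter> \<Inter>G \<inter> A \<noteq> {}"
  shows "A \<in> M"
proof -
  have "fip_on Z (insert A M)"
    unfolding fip_on_def
  proof (intro conjI allI impI)
    show "insert A M \<subseteq> Pow Z" using M \<open>A \<subseteq> Z\<close> by (auto simp: fip_on_def)
    fix G assume G: "finite G \<and> G \<subseteq> insert A M"
    show "Z \<inter> \<Inter>G \<noteq> {}"
    proof (cases "A \<in> G")
      case True
      have "Z \<inter> \<Inter>G = Z \<inter> \<Inter>(G - {A}) \<inter> A" using True by blast
      then show ?thesis using meets[of "G - {A}"] G by auto
    qed (use M G in \<open>auto simp: fip_on_def\<close>)
  qed
  then show ?thesis using maximal by blast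
qed

lemma maximal_fip_on_is_ultrafilter:
  assumes M: "fip_on Z M" and maximal: "\<forall>X. fip_on Z X \<and> M \<subseteq> X \<longrightarrow> X = M"
  shows "is_ultrafilter_on Z M"
proof -
  have M_Pow: "M \<subseteq> Pow Z" and M_fip: "\<And>G. finite G \<Longrightarrow> G \<subseteq> M \<Longrightarrow> Z \<inter> \<Inter>G \<noteq> {}"
    using M by (auto simp: fip_on_def)
  note mem = maximal_fip_on_mem[OF M maximal]
  show ?thesis
    unfolding is_ultrafilter_on_def
  proof (intro conjI ballI allI impI)
    show "M \<subseteq> Pow Z" by (fact M_Pow)
    show "Z \<in> M" by (rule mem) (use M_fip in auto)
    show "{} \<notin> M" using M_fip[of "{{}}"] by auto
  next
    fix A B assume "A \<in> M" "B \<in> M"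
    show "A \<inter> B \<in> M"
    proof (rule mem)
      show "A \<inter> B \<subseteq> Z" using \<open>A \<in> M\<close> M_Pow by auto
      fix G assume "finite G" "G \<subseteq> M"
      then have "Z \<inter> \<Inter>(insert A (insert B G)) \<noteq> {}"
        using M_fip[of "insert A (insert B G)"] \<open>A \<in> M\<close> \<open>B \<in> M\<close> by simp
      then show "Z \<inter> \<Inter>G \<inter> (A \<inter> B) \<noteq> {}" by auto
    qed
  next
    fix A B assume "A \<in> M" "A \<subseteq> B \<and> B \<subseteq> Z"
    show "B \<in> M"
    proof (rule mem)
      show "B \<subseteq> Z" using \<open>A \<subseteq> B \<and> B \<subseteq> Z\<close> by simp
      fix G assume "finite G" "G \<subseteq> M"
      then have "Z \<inter> \<Inter>(insert A G) \<noteq> {}" using M_fip[of "insert A G"] \<open>A \<in> M\<close> by simp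
      then show "Z \<inter> \<Inter>G \<inter> B \<noteq> {}" using \<open>A \<subseteq> B \<and> B \<subseteq> Z\<close> by auto
    qed
  next
    fix A assume A: "A \<subseteq> Z"
    show "A \<in> M \<or> Z - A \<in> M"
    proof (rule ccontr)
      assume "\<not> (A \<in> M \<or> Z - A \<in> M)"
      then obtain G1 G2 where "finite G1" "G1 \<subseteq> M" "Z \<inter> \<Inter>G1 \<inter> A = {}"
        and "finite G2" "G2 \<subseteq> M" "Z \<inter> \<Inter>G2 \<inter> (Z - A) = {}"
        using mem[OF A] mem[OF Diff_subset] by metis
      then have "finite (G1 \<union> G2)" "G1 \<union> G2 \<subseteq> M" "Z \<inter> \<Inter>(G1 \<union> G2) = {}"
        by auto blast
      then show False using M_fip by blast
    qed
  qed
qed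

lemma ultrafilter_extends_fip:
  assumes "fip_on Z M0"
  obtains q where "is_ultrafilter_on Z q" "M0 \<subseteq> q"
  using maximal_fip_on_exists[OF assms] maximal_fip_on_is_ultrafilter by metis

lemma ultrafilter_onD:
  assumes "is_ultrafilter_on Z q"
  shows ultrafilter_on_subset: "A \<in> q \<Longrightarrow> A \<subseteq> Z"
    and ultrafilter_on_top: "Z \<in> q"
    and ultrafilter_on_empty: "{} \<notin> q"
    and ultrafilter_on_Int: "A \<in> q \<Longrightarrow> B \<in> q \<Longrightarrow> A \<inter> B \<in> q"
    and ultrafilter_on_mono: "A \<in> q \<Longrightarrow> A \<subseteq> B \<Longrightarrow> B \<subseteq> Z \<Longrightarrow> B \<in> q"
    and ultrafilter_on_complement: "A \<subseteq> Z \<Longrightarrow> A \<in> q \<or> Z - A \<in> q"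
  using assms unfolding is_ultrafilter_on_def by (elim conjE; blast)+

lemma ultrafilter_on_Diff_iff:
  assumes uf: "is_ultrafilter_on Z q" and "A \<subseteq> Z"
  shows "Z - A \<in> q \<longleftrightarrow> A \<notin> q"
proof
  assume "Z - A \<in> q"
  then show "A \<notin> q" using ultrafilter_on_Int[OF uf, of A "Z - A"] ultrafilter_on_empty[OF uf] by auto
qed (use ultrafilter_on_complement[OF uf \<open>A \<subseteq> Z\<close>] in blast)

lemma ultrafilter_on_Int_iff:
  assumes "is_ultrafilter_on Z q" "A \<subseteq> Z" "B \<subseteq> Z"
  shows "A \<inter> B \<in> q \<longleftrightarrow> A \<in> q \<and> B \<in> q"
  using assms ultrafilter_on_Int[OF assms(1)] ultrafilter_on_mono[OF assms(1)]
  by (meson Int_lower1 Int_lower2)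

lemma ultrafilter_on_finite_Inter:
  assumes "is_ultrafilter_on Z q" "finite G" "G \<subseteq> q"
  shows "Z \<inter> \<Inter>G \<in> q"
  using assms(2,3)
proof (induction G rule: finite_induct)
  case empty
  then show ?case using ultrafilter_on_top[OF assms(1)] by simp
next
  case (insert A G)
  then show ?case using ultrafilter_on_Int[OF assms(1)] by (simp add: Int_left_commute)
qed

definition free_ultrafilters :: "'a set \<Rightarrow> 'a set set set" where
  "free_ultrafilters Z = {q. is_ultrafilter_on Z q} - principal_uf Z ` Z"

lemma free_ultrafilters_is_ultrafilter: "q \<in> free_ultrafilters Z \<Longrightarrow> is_ultrafilter_on Z q"
  by (simp add: free_ultrafilters_def)

lemma free_ultrafilter_not_singleton:
  assumes "q \<in> free_ultrafilters Z" "z \<in> Z"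
  shows "{z} \<notin> q"
proof
  assume z: "{z} \<in> q"
  have uf: "is_ultrafilter_on Z q" using assms(1) by (rule free_ultrafilters_is_ultrafilter)
  have "q = principal_uf Z z"
  proof (intro equalityI subsetI)
    fix A assume "A \<in> q"
    then have "A \<inter> {z} \<in> q" using ultrafilter_on_Int[OF uf _ z] by blast
    then have "z \<in> A" using ultrafilter_on_empty[OF uf] by (metis Int_empty_right Int_insert_right)
    then show "A \<in> principal_uf Z z"
      using ultrafilter_on_subset[OF uf \<open>A \<in> q\<close>] by (simp add: principal_uf_def)
  next
    fix A assume "A \<in> principal_uf Z z"
    then show "A \<in> q" using ultrafilter_on_mono[OF uf z] by (simp add: principal_uf_def)
  qed
  then show False using assms unfolding free_ultrafilters_def by blast
qed

lemma free_ultrafilter_infinite: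
  assumes q: "q \<in> free_ultrafilters Z" and "A \<in> q"
  shows "infinite A"
proof
  assume "finite A"
  have uf: "is_ultrafilter_on Z q" using q by (rule free_ultrafilters_is_ultrafilter)
  have A: "A \<subseteq> Z" using ultrafilter_on_subset[OF uf \<open>A \<in> q\<close>] .
  have "(\<lambda>z. Z - {z}) ` A \<subseteq> q"
    using ultrafilter_on_Diff_iff[OF uf] free_ultrafilter_not_singleton[OF q] A by auto
  with uf have "Z \<inter> \<Inter>((\<lambda>z. Z - {z}) ` A) \<in> q"
    using \<open>finite A\<close> by (intro ultrafilter_on_finite_Inter) auto
  moreover have "Z \<inter> \<Inter>((\<lambda>z. Z - {z}) ` A) = Z - A" by auto
  ultimately show False using ultrafilter_on_Diff_iff[OF uf A] \<open>A \<in> q\<close> by simp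
qed

lemma free_ultrafilter_extends:
  assumes "F \<subseteq> Pow Z" and infinite_Inter: "\<And>G. finite G \<Longrightarrow> G \<subseteq> F \<Longrightarrow> infinite (Z \<inter> \<Inter>G)"
  obtains q where "q \<in> free_ultrafilters Z" "F \<subseteq> q"
proof -
  let ?cofinite = "(\<lambda>z. Z - {z}) ` Z"
  have "fip_on Z (F \<union> ?cofinite)"
    unfolding fip_on_def
  proof (intro conjI allI impI)
    show "F \<union> ?cofinite \<subseteq> Pow Z" using assms(1) by blast
    fix G assume G: "finite G \<and> G \<subseteq> F \<union> ?cofinite"
    then have "finite (G - F)" "G - F \<subseteq> ?cofinite" by auto
    then obtain S where S: "finite S" "G - F = (\<lambda>z. Z - {z}) ` S"
      using finite_subset_image[of "G - F" "\<lambda>z. Z - {z}" Z] by metis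
    have "infinite (Z \<inter> \<Inter>(G \<inter> F))" using G by (intro infinite_Inter) auto
    then have "infinite (Z \<inter> \<Inter>(G \<inter> F) - S)" using \<open>finite S\<close> by (rule Diff_infinite_finite[rotated])
    then obtain x where "x \<in> Z \<inter> \<Inter>(G \<inter> F) - S" using infinite_imp_nonempty by blast
    then have "x \<in> Z \<inter> \<Inter>G" using S(2) by blast
    then show "Z \<inter> \<Inter>G \<noteq> {}" by blast
  qed
  then obtain q where q: "is_ultrafilter_on Z q" "F \<union> ?cofinite \<subseteq> q"
    by (rule ultrafilter_extends_fip)
  have "q \<noteq> principal_uf Z z" if "z \<in> Z" for z
    using q(2) that by (auto simp: principal_uf_def)
  then have "q \<in> free_ultrafilters Z" using q(1) unfolding free_ultrafilters_def by blast
  then show ?thesis using q(2) that by blast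
qed

lemma generate_topology_on_Int_closed_basis:
  assumes Int_closed: "\<And>a b. a \<in> \<S> \<Longrightarrow> b \<in> \<S> \<Longrightarrow> a \<inter> b \<in> \<S>"
    and "generate_topology_on \<S> W" "x \<in> W"
  shows "\<exists>B\<in>\<S>. x \<in> B \<and> B \<subseteq> W"
  using assms(2,3)
proof (induction arbitrary: x rule: generate_topology_on.induct)
  case (Int a b)
  then obtain A B where "A \<in> \<S>" "x \<in> A" "A \<subseteq> a" "B \<in> \<S>" "x \<in> B" "B \<subseteq> b"
    by (meson IntD1 IntD2)
  then have "A \<inter> B \<in> \<S>" "x \<in> A \<inter> B" "A \<inter> B \<subseteq> a \<inter> b" using Int_closed by auto
  then show ?case by blast
next
  case (UN K)
  then obtain k where "k \<in> K" "x \<in> k" by blast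
  then obtain B where "B \<in> \<S>" "x \<in> B" "B \<subseteq> k" using UN.IH by blast
  then show ?case using \<open>k \<in> K\<close> by blast
qed auto

lemma topspace_beta_discrete: "topspace (beta_discrete Z) = {q. is_ultrafilter_on Z q}"
  unfolding beta_discrete_def topology_generated_by_topspace
  by (auto dest: ultrafilter_on_top)

lemma topspace_beta_remainder: "topspace (beta_remainder Z) = free_ultrafilters Z"
  unfolding beta_remainder_def free_ultrafilters_def by (simp add: topspace_beta_discrete) blast

lemma openin_beta_remainder_nbhd:
  assumes "openin (beta_remainder Z) V" "q \<in> V"
  obtains B where "B \<in> q" "\<forall>u\<in>free_ultrafilters Z. B \<in> u \<longrightarrow> u \<in> V"
proof -
  let ?\<S> = "(\<lambda>A. {U. is_ultrafilter_on Z U \<and> A \<in> U}) ` Pow Z"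
  have "topspace (beta_discrete Z) - principal_uf Z ` Z = free_ultrafilters Z"
    by (simp add: topspace_beta_discrete free_ultrafilters_def)
  then obtain W where "openin (beta_discrete Z) W" "V = W \<inter> free_ultrafilters Z"
    using assms(1) unfolding beta_remainder_def openin_subtopology by auto
  then have W: "generate_topology_on ?\<S> W" "V = W \<inter> free_ultrafilters Z"
    unfolding beta_discrete_def openin_topology_generated_by_iff by simp_all
  have "a \<inter> b \<in> ?\<S>" if a: "a \<in> ?\<S>" and b: "b \<in> ?\<S>" for a b
  proof -
    obtain A where A: "A \<subseteq> Z" "a = {U. is_ultrafilter_on Z U \<and> A \<in> U}"
      using a by auto
    obtain B where B: "B \<subseteq> Z" "b = {U. is_ultrafilter_on Z U \<and> B \<in> U}"
      using b by auto
    from A B have "a \<inter> b = {U. is_ultrafilter_on Z U \<and> A \<inter> B \<in> U}"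
      by (auto simp: ultrafilter_on_Int_iff)
    then show ?thesis using \<open>A \<subseteq> Z\<close> by blast
  qed
  moreover have "q \<in> W" using assms(2) W(2) by blast
  ultimately obtain b where "b \<in> ?\<S>" "q \<in> b" "b \<subseteq> W"
    using generate_topology_on_Int_closed_basis[OF _ W(1)] by meson
  then obtain B where "q \<in> {U. is_ultrafilter_on Z U \<and> B \<in> U}"
    "{U. is_ultrafilter_on Z U \<and> B \<in> U} \<subseteq> W" by blast
  then show ?thesis
    using W(2) that by (auto dest: free_ultrafilters_is_ultrafilter)
qed

lemma delta_spaceD:
  assumes "delta_space X" "\<And>n. D n \<subseteq> topspace X" "decseq D" "(\<Inter>n. D n) = {}"
  obtains V where "\<And>n. openin X (V n)" "\<And>n. D n \<subseteq> V n" "(\<Inter>n. V n) = {}"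
proof -
  have "\<exists>V. (\<forall>n. openin X (V n)) \<and> decseq V \<and> (\<forall>n. D n \<subseteq> V n) \<and> (\<Inter>n. V n) = {}"
    using assms(1)[unfolded delta_space_def, rule_format, of D] assms(2-4) by blast
  then show ?thesis using that by blast
qed

lemma diagonal_of_coherent_stages:
  fixes s :: "nat \<Rightarrow> nat \<Rightarrow> 'b"
  assumes m: "strict_mono m" and agree: "\<And>j k. k < m j \<Longrightarrow> s (Suc j) k = s j k"
    and "k < m j"
  shows "s (Suc k) k = s j k"
proof -
  have stable: "s i' k = s i k" if "i \<le> i'" "k < m i" for i i'
    using that(1)
  proof (induction i' rule: dec_induct)
    case (step i')
    then show ?case using agree[of k i'] strict_mono_less_eq[OF m, of i i'] that(2) by simp
  qed simp
  show ?thesis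
  proof (cases "Suc k \<le> j")
    case True
    have "k < m (Suc k)" using strict_mono_imp_increasing[OF m, of "Suc k"] by simp
    then show ?thesis using stable[of "Suc k" j] True by simp
  next
    case False
    then show ?thesis using stable[of j "Suc k"] \<open>k < m j\<close> by simp
  qed
qed

(* The Baire category theorem for the product space nat \<Rightarrow> 'b, phrased with cylinders. *)
lemma nested_cylinders_meet:
  fixes P :: "nat \<Rightarrow> (nat \<Rightarrow> 'b) \<Rightarrow> bool"
  assumes refine: "\<And>j s m. \<exists>s' m'. m < m' \<and> (\<forall>k<m. s' k = s k) \<and>
                     (\<forall>y. (\<forall>k<m'. y k = s' k) \<longrightarrow> P j y)"
  shows "\<exists>y. \<forall>j. P j y"
proof -
  define refines where "refines j s m p \<longleftrightarrow> m < snd p \<and> (\<forall>k<m. fst p k = s k) \<and>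
      (\<forall>y. (\<forall>k<snd p. y k = fst p k) \<longrightarrow> P j y)" for j s m and p :: "(nat \<Rightarrow> 'b) \<times> nat"
  have "\<exists>p. refines j s m p" for j s m
  proof -
    obtain s' m' where "m < m'" "\<forall>k<m. s' k = s k" "\<forall>y. (\<forall>k<m'. y k = s' k) \<longrightarrow> P j y"
      using refine[where j=j and s=s and m=m] by (elim exE conjE)
    then have "refines j s m (s', m')" by (simp add: refines_def)
    then show ?thesis ..
  qed
  define nxt where "nxt j s m = (SOME p. refines j s m p)" for j s m
  have nxt: "refines j s m (nxt j s m)" for j s m
    unfolding nxt_def by (rule someI_ex) fact
  define stage where "stage = rec_nat (undefined, 0) (\<lambda>j p. nxt j (fst p) (snd p))"
  define s where "s j = fst (stage j)" for j
  define m where "m j = snd (stage j)" for j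
  have stage_Suc: "stage (Suc j) = nxt j (s j) (m j)" for j
    by (simp add: stage_def s_def m_def)
  have m_less: "m j < m (Suc j)" for j
    using nxt[of j "s j" "m j"] by (simp add: refines_def m_def stage_Suc)
  have s_agree: "s (Suc j) k = s j k" if "k < m j" for j k
    using nxt[of j "s j" "m j"] that by (simp add: refines_def s_def stage_Suc)
  have P_stage: "P j y" if "\<forall>k<m (Suc j). y k = s (Suc j) k" for j y
    using nxt[of j "s j" "m j"] that by (simp add: refines_def s_def m_def stage_Suc)
  have "strict_mono m" using m_less by (simp add: strict_mono_Suc_iff)
  then have "s (Suc k) k = s (Suc j) k" if "k < m (Suc j)" for j k
    using diagonal_of_coherent_stages s_agree that by metis
  then have "P j (\<lambda>k. s (Suc k) k)" for j using P_stage by simp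
  then show ?thesis by blast
qed

lemma infinite_imp_countable_injection:
  assumes "infinite Z"
  obtains e :: "'b::countable \<Rightarrow> 'a" where "inj e" "range e \<subseteq> Z"
proof -
  obtain f :: "nat \<Rightarrow> 'a" where f: "inj f" "range f \<subseteq> Z"
    using infinite_countable_subset[OF assms] by blast
  have "inj (f \<circ> to_nat)" using inj_compose[OF f(1) inj_to_nat] .
  moreover have "range (f \<circ> to_nat) \<subseteq> Z" using f(2) by auto
  ultimately show ?thesis by (rule that)
qed

(* For injective e, the point e (xs, t) lies in coord_set e k iff xs ! k: every finite Boolean
   pattern over the coord_set e k is realised by infinitely many points. *)
definition coord_set :: "(bool list \<times> nat \<Rightarrow> 'a) \<Rightarrow> nat \<Rightarrow> 'a set" where
  "coord_set e k = e ` {(xs, t). k < length xs \<and> xs ! k}"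

definition coords :: "(bool list \<times> nat \<Rightarrow> 'a) \<Rightarrow> 'a set set \<Rightarrow> nat \<Rightarrow> bool" where
  "coords e q k \<longleftrightarrow> coord_set e k \<in> q"

definition coord_literal :: "(bool list \<times> nat \<Rightarrow> 'a) \<Rightarrow> 'a set \<Rightarrow> (nat \<Rightarrow> bool) \<Rightarrow> nat \<Rightarrow> 'a set" where
  "coord_literal e Z y k = (if y k then coord_set e k else Z - coord_set e k)"

definition coord_fiber :: "(bool list \<times> nat \<Rightarrow> 'a) \<Rightarrow> 'a set \<Rightarrow> (nat \<Rightarrow> bool) \<Rightarrow> 'a set set set" where
  "coord_fiber e Z y = {q \<in> free_ultrafilters Z. coords e q = y}"

lemma mem_coord_set_iff: "inj e \<Longrightarrow> e (xs, t) \<in> coord_set e k \<longleftrightarrow> k < length xs \<and> xs ! k"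
  unfolding coord_set_def by (auto dest: injD)

lemma coord_literal_mem_iff:
  assumes "is_ultrafilter_on Z q" "range e \<subseteq> Z"
  shows "coord_literal e Z y k \<in> q \<longleftrightarrow> (coords e q k \<longleftrightarrow> y k)"
proof -
  have "coord_set e k \<subseteq> Z" using assms(2) by (auto simp: coord_set_def)
  then show ?thesis
    by (simp add: coord_literal_def coords_def ultrafilter_on_Diff_iff[OF assms(1)])
qed

lemma coords_eq_iff:
  assumes "is_ultrafilter_on Z q" "range e \<subseteq> Z"
  shows "coords e q = y \<longleftrightarrow> range (coord_literal e Z y) \<subseteq> q"
  by (simp add: fun_eq_iff image_subset_iff coord_literal_mem_iff[OF assms])

lemma infinite_Inter_coord_literals:
  assumes "inj e" "range e \<subseteq> Z" "finite K"
  shows "infinite (Z \<inter> \<Inter>(coord_literal e Z y ` K))"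
proof -
  obtain m where m: "K \<subseteq> {..<m}" using finite_nat_bounded[OF assms(3)] by blast
  define xs where "xs = map y [0..<m]"
  have "e (xs, t) \<in> coord_literal e Z y k" if "k \<in> K" for t k
    using m that assms(2) by (auto simp: coord_literal_def mem_coord_set_iff[OF assms(1)] xs_def)
  then have "range (\<lambda>t. e (xs, t)) \<subseteq> Z \<inter> \<Inter>(coord_literal e Z y ` K)"
    using assms(2) by blast
  moreover have "infinite (range (\<lambda>t. e (xs, t)))"
    using assms(1) by (intro range_inj_infinite) (simp add: inj_def)
  ultimately show ?thesis using finite_subset by blast
qed

lemma coord_fiber_nonempty:
  assumes "inj e" "range e \<subseteq> Z"
  shows "coord_fiber e Z y \<noteq> {}"
proof -
  have "range (coord_literal e Z y) \<subseteq> Pow Z"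
    using assms(2) by (auto simp: coord_literal_def coord_set_def)
  moreover have "infinite (Z \<inter> \<Inter>G)"
    if G: "finite G" "G \<subseteq> range (coord_literal e Z y)" for G
  proof -
    obtain K where "finite K" "G = coord_literal e Z y ` K"
      using finite_subset_image[OF G] by blast
    then show ?thesis using infinite_Inter_coord_literals[OF assms] by blast
  qed
  ultimately obtain q where "q \<in> free_ultrafilters Z" "range (coord_literal e Z y) \<subseteq> q"
    by (rule free_ultrafilter_extends)
  then show ?thesis
    using coords_eq_iff[OF free_ultrafilters_is_ultrafilter assms(2)] by (auto simp: coord_fiber_def)
qed

lemma coord_fiber_subset_open_imp_cylinder:
  assumes inj: "inj e" and rng: "range e \<subseteq> Z"
    and V: "openin (beta_remainder Z) V" and fiber: "coord_fiber e Z y \<subseteq> V"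
  shows "\<exists>m. \<forall>y'. (\<forall>k<m. y' k = y k) \<longrightarrow> coord_fiber e Z y' \<subseteq> V"
proof (rule ccontr)
  assume "\<not> ?thesis"
  then have bad: "\<exists>y' q. (\<forall>k<m. y' k = y k) \<and> q \<in> coord_fiber e Z y' \<and> q \<notin> V" for m
    by blast
  (* A free ultrafilter containing H is outside V, yet one also containing the literals of y
     would lie on the fibre of y. *)
  define H where "H = {Z - B | B. B \<subseteq> Z \<and> (\<forall>u\<in>free_ultrafilters Z. B \<in> u \<longrightarrow> u \<in> V)}"
  have "range (coord_literal e Z y) \<union> H \<subseteq> Pow Z"
    using rng by (auto simp: coord_literal_def coord_set_def H_def)
  moreover have "infinite (Z \<inter> \<Inter>G)"
    if G: "finite G" "G \<subseteq> range (coord_literal e Z y) \<union> H" for G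
  proof -
    obtain K where "finite K" and K: "G - H = coord_literal e Z y ` K"
      using finite_subset_image[of "G - H" "coord_literal e Z y" UNIV] G by blast
    then obtain m where m: "K \<subseteq> {..<m}" using finite_nat_bounded by blast
    obtain y' q where y': "\<forall>k<m. y' k = y k" and q: "q \<in> coord_fiber e Z y'" "q \<notin> V"
      using bad by blast
    have q_free: "q \<in> free_ultrafilters Z" and uf: "is_ultrafilter_on Z q"
      using q(1) by (auto simp: coord_fiber_def free_ultrafilters_is_ultrafilter)
    have "G \<subseteq> q"
    proof
      fix g assume "g \<in> G"
      show "g \<in> q"
      proof (cases "g \<in> H")
        case True
        then obtain B where B: "B \<subseteq> Z" "g = Z - B" "\<forall>u\<in>free_ultrafilters Z. B \<in> u \<longrightarrow> u \<in> V"
          by (auto simp: H_def)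
        then have "B \<notin> q" using q_free q(2) by blast
        then show ?thesis using ultrafilter_on_Diff_iff[OF uf B(1)] B(2) by simp
      next
        case False
        then obtain k where "k \<in> K" "g = coord_literal e Z y k" using K \<open>g \<in> G\<close> by blast
        then have "g = coord_literal e Z y' k" using m y' by (auto simp: coord_literal_def)
        moreover have "range (coord_literal e Z y') \<subseteq> q"
          using q(1) coords_eq_iff[OF uf rng] by (simp add: coord_fiber_def)
        ultimately show ?thesis by blast
      qed
    qed
    then have "Z \<inter> \<Inter>G \<in> q" by (rule ultrafilter_on_finite_Inter[OF uf G(1)])
    then show ?thesis by (rule free_ultrafilter_infinite[OF q_free])
  qed
  ultimately obtain q where q: "q \<in> free_ultrafilters Z" "range (coord_literal e Z y) \<union> H \<subseteq> q"
    by (rule free_ultrafilter_extends)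
  have uf: "is_ultrafilter_on Z q" using q(1) by (rule free_ultrafilters_is_ultrafilter)
  have "q \<in> V"
    using fiber q coords_eq_iff[OF uf rng] by (auto simp: coord_fiber_def)
  then obtain B where B: "B \<in> q" "\<forall>u\<in>free_ultrafilters Z. B \<in> u \<longrightarrow> u \<in> V"
    by (rule openin_beta_remainder_nbhd[OF V])
  have "B \<subseteq> Z" using ultrafilter_on_subset[OF uf B(1)] .
  then have "Z - B \<in> q" using B(2) q(2) by (auto simp: H_def)
  then show False using ultrafilter_on_Diff_iff[OF uf \<open>B \<subseteq> Z\<close>] B(1) by simp
qed

definition finite_support_beyond :: "(bool list \<times> nat \<Rightarrow> 'a) \<Rightarrow> 'a set \<Rightarrow> nat \<Rightarrow> 'a set set set" where
  "finite_support_beyond e Z n =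
     {q \<in> free_ultrafilters Z. finite {k. coords e q k} \<and> (\<exists>k\<ge>n. coords e q k)}"

lemma decseq_finite_support_beyond: "decseq (finite_support_beyond e Z)"
  unfolding decseq_def finite_support_beyond_def by (auto intro: le_trans)

lemma INT_finite_support_beyond: "(\<Inter>n. finite_support_beyond e Z n) = {}"
proof -
  have "\<not> (\<forall>n. \<exists>k\<ge>n. coords e q k)" if "finite {k. coords e q k}" for q
    using that infinite_nat_iff_unbounded_le[of "{k. coords e q k}"] by simp
  then show ?thesis unfolding finite_support_beyond_def by blast
qed

lemma subcylinder_fibers_in_open_superset:
  assumes inj: "inj e" and rng: "range e \<subseteq> Z"
    and V: "openin (beta_remainder Z) V" and D: "finite_support_beyond e Z j \<subseteq> V"
  shows "\<exists>s' m'. m < m' \<and> (\<forall>k<m. s' k = s k) \<and>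
           (\<forall>y. (\<forall>k<m'. y k = s' k) \<longrightarrow> coord_fiber e Z y \<subseteq> V)"
proof -
  define r where "r k = (if k < m then s k else k = max m j)" for k
  have "finite {k. r k}"
    by (rule finite_subset[of _ "{..max m j}"]) (auto simp: r_def split: if_splits)
  moreover have "r (max m j)" by (simp add: r_def)
  moreover have "j \<le> max m j" by simp
  ultimately have "coord_fiber e Z r \<subseteq> finite_support_beyond e Z j"
    unfolding coord_fiber_def finite_support_beyond_def by blast
  then obtain m0 where m0: "\<forall>y. (\<forall>k<m0. y k = r k) \<longrightarrow> coord_fiber e Z y \<subseteq> V"
    using coord_fiber_subset_open_imp_cylinder[OF inj rng V] D by blast
  show ?thesis
  proof (intro exI conjI)
    show "m < max m0 (Suc m)" by simp
    show "\<forall>k<m. r k = s k" by (simp add: r_def)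
    show "\<forall>y. (\<forall>k<max m0 (Suc m). y k = r k) \<longrightarrow> coord_fiber e Z y \<subseteq> V" using m0 by simp
  qed
qed

theorem proposition3p16:
  fixes Z :: "'a set"
  assumes "infinite Z"
  shows "\<not> delta_space (beta_remainder Z)"
proof
  assume delta: "delta_space (beta_remainder Z)"
  obtain e :: "bool list \<times> nat \<Rightarrow> 'a" where inj: "inj e" and rng: "range e \<subseteq> Z"
    using assms by (rule infinite_imp_countable_injection)
  have "finite_support_beyond e Z n \<subseteq> topspace (beta_remainder Z)" for n
    by (auto simp: topspace_beta_remainder finite_support_beyond_def)
  then obtain V where V: "\<And>n. openin (beta_remainder Z) (V n)"
      "\<And>n. finite_support_beyond e Z n \<subseteq> V n" "(\<Inter>n. V n) = {}"
    by (rule delta_spaceD[OF delta _ decseq_finite_support_beyond INT_finite_support_beyond]) blast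
  have "\<exists>y. \<forall>j. coord_fiber e Z y \<subseteq> V j"
    using subcylinder_fibers_in_open_superset[OF inj rng V(1,2)] by (rule nested_cylinders_meet)
  then obtain y where "\<And>j. coord_fiber e Z y \<subseteq> V j" by blast
  moreover obtain q where "q \<in> coord_fiber e Z y"
    using coord_fiber_nonempty[OF inj rng] by blast
  ultimately show False using V(3) by blast
qed

end
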